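(* Let $L$ be a PG-lattice and $M$ a faithful multiplication PG-lattice $L$-module, and let $\delta_1:M\to M$ be $\delta_1(A)=(\sqrt{(A:I_M)})I_M$. Then $\delta_1(A\wedge B)=\delta_1(A)\wedge\delta_1(B)$ for all $A,B\in M$.
   Context: $L$ is a multiplicative lattice (complete lattice with commutative, associative multiplication distributing over arbitrary joins, identity $1$, least $0$), compactly generated, $1$ compact, finite products of compact elements compact; $L_\ast$ = compact elements. An $L$-module is a complete lattice $M$ (least $O_M$, greatest $I_M$) with product $aB\in M$ satisfying $(\bigvee a_\alpha)A=\bigvee(a_\alpha A)$, $a(\bigvee A_\alpha)=\bigvee(aA_\alpha)$, $(ab)A=a(bA)$, $1A=A$, $0A=O_M$. $(A:B)=\bigvee\{x\in L:xB\leqslant A\}$; $\sqrt a=\bigvee\{x\in L_\ast:x^n\leqslant a\text{ for some }n\in\mathbb Z_+\}$. $e\in L$ is principal if $a\wedge be=((a:e)\wedge b)e$ and $(ae\vee b):e=(b:e)\vee a$ for all $a,b$; $L$ is a PG-lattice if every element is a join of principal elements. $N\in M$ is principal if $(b\wedge(B:N))N=bN\wedge B$ and $b\vee(B:N)=((bN\vee B):N)$ for all $b\in L,B\in M$; $M$ is a PG-lattice module if every element is a join of principal elements. $M$ is faithful if $(O_M:I_M)=0$; a multiplication module if every element of $M$ is $aI_M$ for some $a\in L$. *)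

theory Defs
  imports Main
begin

text \<open>Multiplicative lattices: the carrier is a complete lattice with a commutative
monoid multiplication (identity 1); the least element 0 is bot.\<close>

definition lcompact :: "'a::complete_lattice \<Rightarrow> bool" where
  "lcompact x \<longleftrightarrow> (\<forall>S. x \<le> Sup S \<longrightarrow> (\<exists>F. F \<subseteq> S \<and> finite F \<and> x \<le> Sup F))"

definition multiplicative_lattice :: "'a::{complete_lattice, comm_monoid_mult} itself \<Rightarrow> bool" where
  "multiplicative_lattice (T :: 'a itself) \<longleftrightarrow>
     (\<forall>(a::'a) S. a * Sup S = Sup ((\<lambda>s. a * s) ` S)) \<and>
     (1::'a) = top \<and>
     (\<forall>x::'a. \<exists>S. (\<forall>s\<in>S. lcompact s) \<and> x = Sup S) \<and>
     lcompact (1::'a) \<and>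
     (\<forall>x y::'a. lcompact x \<longrightarrow> lcompact y \<longrightarrow> lcompact (x * y))"

definition lres :: "'a::{complete_lattice, comm_monoid_mult} \<Rightarrow> 'a \<Rightarrow> 'a" where
  "lres a e = Sup {x. x * e \<le> a}"

definition lrad :: "'a::{complete_lattice, comm_monoid_mult} \<Rightarrow> 'a" where
  "lrad a = Sup {x. lcompact x \<and> (\<exists>n::nat. n \<ge> 1 \<and> x ^ n \<le> a)}"

definition principal_elem :: "'a::{complete_lattice, comm_monoid_mult} \<Rightarrow> bool" where
  "principal_elem e \<longleftrightarrow>
     (\<forall>a b. inf a (b * e) = (inf (lres a e) b) * e) \<and>
     (\<forall>a b. lres (sup (a * e) b) e = sup (lres b e) a)"

definition PG_lattice :: "'a::{complete_lattice, comm_monoid_mult} itself \<Rightarrow> bool" where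
  "PG_lattice (T :: 'a itself) \<longleftrightarrow>
     (\<forall>x::'a. \<exists>S. (\<forall>e\<in>S. principal_elem e) \<and> x = Sup S)"

text \<open>L-modules: act a A is the product aA.\<close>
definition lattice_module ::
  "('a::{complete_lattice, comm_monoid_mult} \<Rightarrow> 'm::complete_lattice \<Rightarrow> 'm) \<Rightarrow> bool" where
  "lattice_module act \<longleftrightarrow>
     (\<forall>S A. act (Sup S) A = Sup ((\<lambda>a. act a A) ` S)) \<and>
     (\<forall>a S. act a (Sup S) = Sup (act a ` S)) \<and>
     (\<forall>a b A. act (a * b) A = act a (act b A)) \<and>
     (\<forall>A. act 1 A = A) \<and>
     (\<forall>A. act bot A = bot)"

definition mres ::
  "('a::{complete_lattice, comm_monoid_mult} \<Rightarrow> 'm::complete_lattice \<Rightarrow> 'm) \<Rightarrow> 'm \<Rightarrow> 'm \<Rightarrow> 'a" where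
  "mres act A B = Sup {x. act x B \<le> A}"

definition principal_melem ::
  "('a::{complete_lattice, comm_monoid_mult} \<Rightarrow> 'm::complete_lattice \<Rightarrow> 'm) \<Rightarrow> 'm \<Rightarrow> bool" where
  "principal_melem act N \<longleftrightarrow>
     (\<forall>b B. act (inf b (mres act B N)) N = inf (act b N) B) \<and>
     (\<forall>b B. sup b (mres act B N) = mres act (sup (act b N) B) N)"

definition PG_lattice_module ::
  "('a::{complete_lattice, comm_monoid_mult} \<Rightarrow> 'm::complete_lattice \<Rightarrow> 'm) \<Rightarrow> bool" where
  "PG_lattice_module act \<longleftrightarrow>
     (\<forall>A::'m. \<exists>S. (\<forall>N\<in>S. principal_melem act N) \<and> A = Sup S)"

definition faithful_module ::
  "('a::{complete_lattice, comm_monoid_mult} \<Rightarrow> 'm::complete_lattice \<Rightarrow> 'm) \<Rightarrow> bool" where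
  "faithful_module act \<longleftrightarrow> mres act bot top = bot"

definition multiplication_module ::
  "('a::{complete_lattice, comm_monoid_mult} \<Rightarrow> 'm::complete_lattice \<Rightarrow> 'm) \<Rightarrow> bool" where
  "multiplication_module act \<longleftrightarrow> (\<forall>A::'m. \<exists>a. A = act a top)"

definition delta1 ::
  "('a::{complete_lattice, comm_monoid_mult} \<Rightarrow> 'm::complete_lattice \<Rightarrow> 'm) \<Rightarrow> 'm \<Rightarrow> 'm" where
  "delta1 act A = act (lrad (mres act A top)) top"

end

theory Submission
  imports Defs
begin

text \<open>Write \<open>a = (A : I)\<close> and \<open>b = (B : I)\<close>; then \<open>(A \<sqinter> B : I) = a \<sqinter> b\<close> and
\<open>\<surd>(a \<sqinter> b) = \<surd>a \<sqinter> \<surd>b\<close>, so only \<open>\<delta>\<^sub>1 A \<sqinter> \<delta>\<^sub>1 B \<le> \<delta>\<^sub>1 (A \<sqinter> B)\<close> needs work,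
and it suffices to check it on the principal elements \<open>N\<close> below \<open>\<delta>\<^sub>1 A \<sqinter> \<delta>\<^sub>1 B\<close>.
Such an \<open>N\<close> is \<open>nI\<close> with \<open>n = (N : I)\<close>.  From \<open>nI \<le> cI\<close> principality gives
\<open>n \<le> c \<squnion> (O : N)\<close>, and faithfulness gives \<open>n (O : N) = 0\<close>, hence \<open>n\<^sup>2 \<le> c\<close>.
Thus \<open>n\<^sup>2 \<le> \<surd>a \<sqinter> \<surd>b = \<surd>(a \<sqinter> b)\<close>, and since radicals are closed under taking
square roots, \<open>n \<le> \<surd>(a \<sqinter> b)\<close>, i.e. \<open>N \<le> \<delta>\<^sub>1 (A \<sqinter> B)\<close>.\<close>

unbundle lattice_syntax

lemma lcompactD: "lcompact x \<Longrightarrow> x \<le> Sup S \<Longrightarrow> \<exists>F\<subseteq>S. finite F \<and> x \<le> Sup F"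
  unfolding lcompact_def by blast

context
  assumes mult_lattice: "multiplicative_lattice TYPE('a::{complete_lattice, comm_monoid_mult})"
begin

lemma mult_Sup_distrib: "(a::'a) * Sup S = Sup ((*) a ` S)"
  using mult_lattice unfolding multiplicative_lattice_def by blast

lemma one_eq_top: "(1::'a) = top"
  using mult_lattice unfolding multiplicative_lattice_def by blast

lemma lcompact_mult: "lcompact (x::'a) \<Longrightarrow> lcompact y \<Longrightarrow> lcompact (x * y)"
  using mult_lattice unfolding multiplicative_lattice_def by blast

lemma Sup_lcompact_eq: "\<exists>S. (\<forall>s\<in>S. lcompact s) \<and> (x::'a) = Sup S"
  using mult_lattice unfolding multiplicative_lattice_def by blast

lemma mult_sup_distrib: "(a::'a) * (x \<squnion> y) = a * x \<squnion> a * y"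
  using mult_Sup_distrib[of a "{x, y}"] by simp

lemma mult_left_mono_lattice: "(x::'a) \<le> y \<Longrightarrow> a * x \<le> a * y"
  by (metis le_iff_sup mult_sup_distrib)

lemma mult_mono_lattice: "(x::'a) \<le> y \<Longrightarrow> a \<le> b \<Longrightarrow> a * x \<le> b * y"
  by (metis mult_left_mono_lattice mult.commute order_trans)

lemma mult_le_right: "(a::'a) * x \<le> x"
  by (metis mult_mono_lattice one_eq_top top_greatest order_refl mult_1_left)

lemma mult_le_left: "(a::'a) * x \<le> a"
  by (metis mult_le_right mult.commute)

lemma power_mono_lattice: "(x::'a) \<le> y \<Longrightarrow> x ^ n \<le> y ^ n"
  by (induction n) (auto intro: mult_mono_lattice)

lemma power_add_le: "(x::'a) ^ (k + l) \<le> x ^ k"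
  by (simp add: power_add mult_le_left)

lemma power_sup_le: "((y::'a) \<squnion> s) ^ (i + j) \<le> y ^ i \<squnion> s ^ j"
proof (induction "i + j" arbitrary: i j)
  case 0
  then show ?case by simp
next
  case (Suc n)
  note IH = Suc.hyps(1) and n_eq = Suc.hyps(2)
  have "(y \<squnion> s) ^ (i + j) = (y \<squnion> s) * (y \<squnion> s) ^ n"
    by (simp flip: n_eq)
  also have "\<dots> = y * (y \<squnion> s) ^ n \<squnion> s * (y \<squnion> s) ^ n"
    by (metis mult.commute mult_sup_distrib)
  also have "\<dots> \<le> y ^ i \<squnion> s ^ j"
  proof (rule sup_least)
    show "y * (y \<squnion> s) ^ n \<le> y ^ i \<squnion> s ^ j"
    proof (cases i)
      case 0
      then show ?thesis by (simp add: one_eq_top)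
    next
      case (Suc i')
      then have "y * (y \<squnion> s) ^ n \<le> y * (y ^ i' \<squnion> s ^ j)"
        using IH[of i' j] n_eq by (intro mult_left_mono_lattice) simp
      also have "\<dots> \<le> y ^ i \<squnion> s ^ j"
        using Suc by (simp add: mult_sup_distrib le_supI2 mult_le_right)
      finally show ?thesis .
    qed
    show "s * (y \<squnion> s) ^ n \<le> y ^ i \<squnion> s ^ j"
    proof (cases j)
      case 0
      then show ?thesis by (simp add: one_eq_top)
    next
      case (Suc j')
      then have "s * (y \<squnion> s) ^ n \<le> s * (y ^ i \<squnion> s ^ j')"
        using IH[of i j'] n_eq by (intro mult_left_mono_lattice) simp
      also have "\<dots> \<le> y ^ i \<squnion> s ^ j"
        using Suc by (simp add: mult_sup_distrib le_supI1 mult_le_right)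
      finally show ?thesis .
    qed
  qed
  finally show ?case .
qed

lemma lrad_mono: "(a::'a) \<le> b \<Longrightarrow> lrad a \<le> lrad b"
  unfolding lrad_def by (rule Sup_subset_mono) (auto intro: order_trans)

lemma le_lradI: "lcompact (x::'a) \<Longrightarrow> k \<ge> 1 \<Longrightarrow> x ^ k \<le> a \<Longrightarrow> x \<le> lrad a"
  unfolding lrad_def by (rule Sup_upper) blast

lemma Sup_finite_power_le:
  assumes "finite F" "\<forall>x\<in>F. \<exists>k\<ge>1. x ^ k \<le> (a::'a)"
  shows "\<exists>k\<ge>1. Sup F ^ k \<le> a"
  using assms
proof (induction F rule: finite_induct)
  case empty
  show ?case by (intro exI[of _ 1]) simp
next
  case (insert x F)
  then obtain k l where "k \<ge> 1" "x ^ k \<le> a" "Sup F ^ l \<le> a" by auto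
  then have "(x \<squnion> Sup F) ^ (k + l) \<le> a"
    using power_sup_le[of x "Sup F" k l] by (meson le_sup_iff order_trans)
  then show ?case using \<open>k \<ge> 1\<close> by (intro exI[of _ "k + l"]) simp
qed

lemma power_le_of_lcompact_le_lrad:
  assumes "lcompact (x::'a)" "x \<le> lrad a"
  shows "\<exists>k\<ge>1. x ^ k \<le> a"
proof -
  let ?N = "{x. lcompact x \<and> (\<exists>k\<ge>1. x ^ k \<le> a)}"
  have "x \<le> Sup ?N"
    using assms(2) unfolding lrad_def .
  then obtain F where F: "F \<subseteq> ?N" "finite F" "x \<le> Sup F"
    using lcompactD[OF assms(1)] by blast
  then obtain k where "k \<ge> 1" "Sup F ^ k \<le> a"
    using Sup_finite_power_le by blast
  then show ?thesis
    using power_mono_lattice[OF F(3)] by (meson order_trans)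
qed

lemma le_lrad_iff:
  "(n::'a) \<le> lrad a \<longleftrightarrow> (\<forall>x. lcompact x \<and> x \<le> n \<longrightarrow> (\<exists>k\<ge>1. x ^ k \<le> a))"
proof
  assume "n \<le> lrad a"
  then show "\<forall>x. lcompact x \<and> x \<le> n \<longrightarrow> (\<exists>k\<ge>1. x ^ k \<le> a)"
    by (meson order_trans power_le_of_lcompact_le_lrad)
next
  assume nil: "\<forall>x. lcompact x \<and> x \<le> n \<longrightarrow> (\<exists>k\<ge>1. x ^ k \<le> a)"
  obtain S where S: "\<forall>s\<in>S. lcompact s" "n = Sup S"
    using Sup_lcompact_eq by blast
  have "s \<le> lrad a" if "s \<in> S" for s
  proof -
    have "lcompact s" "s \<le> n"
      using S that by (auto intro: Sup_upper)
    then obtain k where "k \<ge> 1" "s ^ k \<le> a"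
      using nil by blast
    then show ?thesis
      using \<open>lcompact s\<close> by (rule le_lradI[rotated])
  qed
  then show "n \<le> lrad a"
    using S(2) by (simp add: Sup_least)
qed

lemma lrad_inf: "lrad ((a::'a) \<sqinter> b) = lrad a \<sqinter> lrad b"
proof (rule antisym)
  show "lrad (a \<sqinter> b) \<le> lrad a \<sqinter> lrad b"
    by (simp add: lrad_mono)
  show "lrad a \<sqinter> lrad b \<le> lrad (a \<sqinter> b)"
    unfolding le_lrad_iff[of _ "a \<sqinter> b"]
  proof (intro allI impI)
    fix x assume x: "lcompact x \<and> x \<le> lrad a \<sqinter> lrad b"
    then obtain k l where "k \<ge> 1" "x ^ k \<le> a" "x ^ l \<le> b"
      using power_le_of_lcompact_le_lrad[of x a] power_le_of_lcompact_le_lrad[of x b] by auto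
    then have "x ^ (k + l) \<le> a \<sqinter> b"
      using power_add_le[of x k l] power_add_le[of x l k] by (simp add: add.commute order_trans)
    then show "\<exists>k\<ge>1. x ^ k \<le> a \<sqinter> b"
      using \<open>k \<ge> 1\<close> by (intro exI[of _ "k + l"]) simp
  qed
qed

lemma le_lrad_of_square_le_lrad: "(n::'a) * n \<le> lrad a \<Longrightarrow> n \<le> lrad a"
  unfolding le_lrad_iff[of n]
proof (intro allI impI)
  fix x assume "n * n \<le> lrad a" and x: "lcompact x \<and> x \<le> n"
  then have "x * x \<le> lrad a"
    using mult_mono_lattice[of x n x n] by (meson order_trans)
  then obtain k where "k \<ge> 1" "(x * x) ^ k \<le> a"
    using power_le_of_lcompact_le_lrad lcompact_mult x by blast
  then show "\<exists>k\<ge>1. x ^ k \<le> a"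
    by (intro exI[of _ "2 * k"]) (simp add: power_mult power2_eq_square)
qed

end

lemma act_Sup_left: "lattice_module act \<Longrightarrow> act (Sup S) A = Sup ((\<lambda>a. act a A) ` S)"
  unfolding lattice_module_def by blast

lemma act_Sup_right: "lattice_module act \<Longrightarrow> act a (Sup S) = Sup (act a ` S)"
  unfolding lattice_module_def by blast

lemma act_mult: "lattice_module act \<Longrightarrow> act (a * b) A = act a (act b A)"
  unfolding lattice_module_def by blast

lemma act_mono_left: "lattice_module act \<Longrightarrow> x \<le> y \<Longrightarrow> act x A \<le> act y A"
  using act_Sup_left[of act "{x, y}" A] by (simp add: le_iff_sup)

lemma act_mono_right: "lattice_module act \<Longrightarrow> A \<le> B \<Longrightarrow> act a A \<le> act a B"
  using act_Sup_right[of act a "{A, B}"] by (simp add: le_iff_sup)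

lemma act_mres_le: "lattice_module act \<Longrightarrow> act (mres act X N) N \<le> X"
  unfolding mres_def by (simp add: act_Sup_left SUP_le_iff)

lemma le_mresI: "act x N \<le> X \<Longrightarrow> x \<le> mres act X N"
  unfolding mres_def by (rule Sup_upper) simp

lemma mres_mono: "X \<le> Y \<Longrightarrow> mres act X N \<le> mres act Y N"
  unfolding mres_def by (rule Sup_subset_mono) (auto intro: order_trans)

lemma mres_inf:
  assumes "lattice_module act"
  shows "mres act (A \<sqinter> B) N = mres act A N \<sqinter> mres act B N"
proof (rule antisym)
  show "mres act (A \<sqinter> B) N \<le> mres act A N \<sqinter> mres act B N"
    by (simp add: mres_mono)
  have "act (mres act A N \<sqinter> mres act B N) N \<le> A \<sqinter> B"
    using act_mres_le[OF assms] act_mono_left[OF assms] by (meson inf_le1 inf_le2 le_inf_iff order_trans)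
  then show "mres act A N \<sqinter> mres act B N \<le> mres act (A \<sqinter> B) N"
    by (rule le_mresI)
qed

lemma multiplication_module_eq_act_mres:
  assumes "lattice_module act" "multiplication_module act"
  shows "N = act (mres act N top) top"
proof (rule antisym)
  obtain x where x: "N = act x top"
    using assms(2) unfolding multiplication_module_def by blast
  then show "N \<le> act (mres act N top) top"
    by (metis act_mono_left[OF assms(1)] le_mresI order_refl)
  show "act (mres act N top) top \<le> N"
    by (rule act_mres_le[OF assms(1)])
qed

lemma le_sup_mres_bot_of_principal_le:
  assumes "lattice_module act" "principal_melem act N" "N = act n top" "N \<le> act c top"
  shows "n \<le> c \<squnion> mres act bot N"
proof -
  have "act n N \<le> act n (act c top)"
    using assms(4) by (rule act_mono_right[OF assms(1)])
  also have "\<dots> = act c N"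
    using assms(3) act_mult[OF assms(1)] by (metis mult.commute)
  finally have "n \<le> mres act (act c N \<squnion> bot) N"
    by (simp add: le_mresI)
  also have "\<dots> = c \<squnion> mres act bot N"
    using assms(2) unfolding principal_melem_def by metis
  finally show ?thesis .
qed

lemma faithful_mult_mres_bot_eq_bot:
  assumes "lattice_module act" "faithful_module act" "N = act n top"
  shows "n * mres act bot N = bot"
proof -
  have "act (mres act bot N * n) top = act (mres act bot N) N"
    using assms(3) act_mult[OF assms(1)] by metis
  also have "\<dots> \<le> bot"
    by (rule act_mres_le[OF assms(1)])
  finally have "mres act bot N * n \<le> mres act bot top"
    by (rule le_mresI)
  then show ?thesis
    using assms(2) unfolding faithful_module_def by (simp add: mult.commute bot_unique)
qed

lemma square_le_of_principal_le_act_top: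
  assumes "multiplicative_lattice TYPE('a::{complete_lattice, comm_monoid_mult})"
    and "lattice_module act" "faithful_module act"
    and "principal_melem act N" "N = act (n::'a) top" "N \<le> act c top"
  shows "n * n \<le> c"
proof -
  have "n * n \<le> n * (c \<squnion> mres act bot N)"
    using le_sup_mres_bot_of_principal_le[OF assms(2,4-6)] by (rule mult_left_mono_lattice[OF assms(1)])
  also have "\<dots> = n * c"
    using faithful_mult_mres_bot_eq_bot[OF assms(2,3,5)] by (simp add: mult_sup_distrib[OF assms(1)])
  also have "\<dots> \<le> c"
    by (rule mult_le_right[OF assms(1)])
  finally show ?thesis .
qed

theorem theorem3p4:
  fixes act :: "'a::{complete_lattice, comm_monoid_mult} \<Rightarrow> 'm::complete_lattice \<Rightarrow> 'm"
  assumes "multiplicative_lattice TYPE('a)"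
    and "PG_lattice TYPE('a)"
    and "lattice_module act"
    and "faithful_module act"
    and "multiplication_module act"
    and "PG_lattice_module act"
  shows "delta1 act (inf A B) = inf (delta1 act A) (delta1 act B)"
proof (rule antisym)
  let ?r = "lrad (mres act A top) \<sqinter> lrad (mres act B top)"
  have delta1_inf: "delta1 act (A \<sqinter> B) = act ?r top"
    unfolding delta1_def mres_inf[OF assms(3)] lrad_inf[OF assms(1)] ..
  then show "delta1 act (A \<sqinter> B) \<le> delta1 act A \<sqinter> delta1 act B"
    unfolding delta1_def by (simp add: act_mono_left[OF assms(3)])
  obtain S where S: "\<forall>N\<in>S. principal_melem act N" "delta1 act A \<sqinter> delta1 act B = Sup S"
    using assms(6) unfolding PG_lattice_module_def by blast
  have "N \<le> act ?r top" if "N \<in> S" for N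
  proof -
    let ?n = "mres act N top"
    have N: "principal_melem act N" "N = act ?n top" "N \<le> delta1 act A \<sqinter> delta1 act B"
      using S that multiplication_module_eq_act_mres[OF assms(3,5)] by (auto intro: Sup_upper)
    have "?n * ?n \<le> lrad (mres act A top)" "?n * ?n \<le> lrad (mres act B top)"
      using N(3) unfolding delta1_def le_inf_iff
      by (auto intro: square_le_of_principal_le_act_top[OF assms(1,3,4) N(1,2)])
    then have "?n * ?n \<le> ?r"
      by simp
    then have "?n \<le> ?r"
      by (metis lrad_inf[OF assms(1)] le_lrad_of_square_le_lrad[OF assms(1)])
    then show ?thesis
      using N(2) act_mono_left[OF assms(3)] by metis
  qed
  then show "delta1 act A \<sqinter> delta1 act B \<le> delta1 act (A \<sqinter> B)"
    using S(2) delta1_inf by (simp add: Sup_least)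
qed

end
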